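(* There are positive constants $c_1$ and $c_2$ such that the following holds. Let $n$ be even and let $N_n$ be the $n\times n$ random Bernoulli matrix. For any $L\ge n$, there is an $n\times n$ deterministic matrix $M$ such that $\|M\| = L$ and $$\mathbb{P}\Big(s_n(M+N_n)\le c_1\frac{n}{L}\Big)\ge c_2 n^{-1/2}.$$
   Context: The random Bernoulli matrix $N_n$ has independent entries, each taking the values $+1$ and $-1$ with probability $1/2$. $\|M\|$ denotes the operator norm (largest singular value) of $M$, and $s_n(X)$ denotes the smallest singular value of an $n\times n$ matrix $X$. *)

theory Defs
  imports "Jordan_Normal_Form.Char_Poly" "HOL-Probability.Probability"
begin

text \<open>Singular values of a real square matrix A are the square roots of the
  eigenvalues of the (positive semidefinite) Gram matrix A^T A.\<close>

definition gram_eigenvalues :: "real mat \<Rightarrow> real set" where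
  "gram_eigenvalues A = {k. eigenvalue (transpose_mat A * A) k}"

definition op_norm :: "real mat \<Rightarrow> real" where
  "op_norm A = sqrt (Max (gram_eigenvalues A))"

definition smallest_sv :: "real mat \<Rightarrow> real" where
  "smallest_sv A = sqrt (Min (gram_eigenvalues A))"

definition sign_mats :: "nat \<Rightarrow> real mat set" where
  "sign_mats n = {A \<in> carrier_mat n n. \<forall>i<n. \<forall>j<n. A $$ (i,j) = 1 \<or> A $$ (i,j) = -1}"

text \<open>Distribution of the random Bernoulli matrix N_n: independent uniform
  +-1 entries, i.e. the uniform distribution on sign_mats n.\<close>
definition bernoulli_matrix :: "nat \<Rightarrow> real mat pmf" where
  "bernoulli_matrix n = pmf_of_set (sign_mats n)"

end

(* Take M = diag(1, L, ..., L), so that |M| = L.  For the test vector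
   x = (1, -N(1,0)/L, ..., -N(n-1,0)/L) we have |x| >= 1, and on the event N(0,0) = -1 the diagonal
   of M cancels the first column of N, leaving (M + N) x = -(1/L) (sum_{j>=1} N(a,j) N(j,0))_a.
   Flipping single signs shows that the expected squared length of that vector is n(n-1)/L^2, so by
   Markov it is at most 8 n^2/L^2 outside an event of probability 1/8.  Hence
   s_n(M + N) <= |(M + N) x| / |x| <= 3n/L with probability at least 1/2 - 1/8 = 3/8, a bound uniform
   in n.  The inequality s_n(A) <= |Ax| / |x| is the Rayleigh principle for A^T A: a minimiser of
   |Ax|^2 on the unit sphere, which exists by compactness, is an eigenvector. *)

theory Submission
  imports Defs
begin

definition inner_on :: "nat \<Rightarrow> (nat \<Rightarrow> real) \<Rightarrow> (nat \<Rightarrow> real) \<Rightarrow> real" where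
  "inner_on n x y = (\<Sum>i<n. x i * y i)"

definition mat_app :: "real mat \<Rightarrow> nat \<Rightarrow> (nat \<Rightarrow> real) \<Rightarrow> nat \<Rightarrow> real" where
  "mat_app A n x i = (\<Sum>j<n. A $$ (i,j) * x j)"

definition gram_form :: "real mat \<Rightarrow> nat \<Rightarrow> (nat \<Rightarrow> real) \<Rightarrow> real" where
  "gram_form A n x = inner_on n (mat_app A n x) (mat_app A n x)"

lemma inner_on_self_nonneg: "0 \<le> inner_on n x x"
  unfolding inner_on_def by (auto intro: sum_nonneg)

lemma gram_form_nonneg: "0 \<le> gram_form A n x"
  unfolding gram_form_def by (rule inner_on_self_nonneg)

lemma inner_on_self_eq_0_iff: "inner_on n x x = 0 \<longleftrightarrow> (\<forall>i<n. x i = 0)"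
  unfolding inner_on_def by (subst sum_nonneg_eq_0_iff) auto

lemma inner_on_commute: "inner_on n x y = inner_on n y x"
  unfolding inner_on_def by (simp add: mult.commute)

lemma inner_on_cong:
  "(\<And>i. i < n \<Longrightarrow> x i = x' i) \<Longrightarrow> (\<And>i. i < n \<Longrightarrow> y i = y' i) \<Longrightarrow>
    inner_on n x y = inner_on n x' y'"
  unfolding inner_on_def by (auto intro!: sum.cong)

lemma mat_app_cong: "(\<And>i. i < n \<Longrightarrow> x i = x' i) \<Longrightarrow> mat_app A n x = mat_app A n x'"
  unfolding mat_app_def by (auto intro!: sum.cong ext)

lemma inner_on_scale: "inner_on n (\<lambda>i. c * x i) (\<lambda>i. c * y i) = c\<^sup>2 * inner_on n x y"
  unfolding inner_on_def by (simp add: sum_distrib_left power2_eq_square mult_ac)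

lemma inner_on_self_add_scale:
  "inner_on n (\<lambda>i. u i + e * y i) (\<lambda>i. u i + e * y i) =
    inner_on n u u + 2 * e * inner_on n u y + e\<^sup>2 * inner_on n y y"
  unfolding inner_on_def
  by (simp add: power2_eq_square algebra_simps sum.distrib sum_distrib_left)

lemma mat_app_add_scale:
  "mat_app A n (\<lambda>i. u i + e * y i) = (\<lambda>i. mat_app A n u i + e * mat_app A n y i)"
  unfolding mat_app_def by (simp add: algebra_simps sum.distrib sum_distrib_left)

lemma mat_app_scale: "mat_app A n (\<lambda>i. c * x i) = (\<lambda>i. c * mat_app A n x i)"
  unfolding mat_app_def by (simp add: sum_distrib_left mult_ac)

lemma gram_form_scale: "gram_form A n (\<lambda>i. c * x i) = c\<^sup>2 * gram_form A n x"
  unfolding gram_form_def mat_app_scale by (rule inner_on_scale)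

lemma inner_on_mat_app_transpose:
  assumes "A \<in> carrier_mat n n"
  shows "inner_on n (mat_app A n x) y = inner_on n x (mat_app (transpose_mat A) n y)"
proof -
  have "inner_on n (mat_app A n x) y = (\<Sum>i<n. \<Sum>j<n. A $$ (i,j) * x j * y i)"
    unfolding inner_on_def mat_app_def by (simp add: sum_distrib_right)
  also have "\<dots> = (\<Sum>j<n. \<Sum>i<n. A $$ (i,j) * x j * y i)"
    by (rule sum.swap)
  also have "\<dots> = inner_on n x (mat_app (transpose_mat A) n y)"
    unfolding inner_on_def mat_app_def using assms
    by (auto simp: sum_distrib_left mult_ac intro!: sum.cong)
  finally show ?thesis .
qed

lemma mult_mat_vec_eq_mat_app:
  assumes "A \<in> carrier_mat n n"
  shows "A *\<^sub>v Matrix.vec n x = Matrix.vec n (mat_app A n x)"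
  using assms by (auto simp: mat_app_def scalar_prod_def row_def atLeast0LessThan)

lemma continuous_on_inner_on_self: "continuous_on S (\<lambda>x. inner_on n x x)"
  unfolding inner_on_def
  by (intro continuous_intros continuous_on_product_then_coordinatewise continuous_on_id)

lemma continuous_on_gram_form: "continuous_on S (gram_form A n)"
  unfolding gram_form_def inner_on_def mat_app_def
  by (intro continuous_intros continuous_on_product_then_coordinatewise continuous_on_id)

text \<open>The box constraint follows from the length condition; it is there to make compactness in
  the product topology evident.\<close>

definition unit_sphere_on :: "nat \<Rightarrow> (nat \<Rightarrow> real) set" where
  "unit_sphere_on n = {x. (\<forall>i. x i \<in> (if i < n then {-1..1} else {0})) \<and> inner_on n x x = 1}"

lemma compact_unit_sphere_on: "compact (unit_sphere_on n)"
proof -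
  let ?B = "PiE UNIV (\<lambda>i. if i < n then {-1..1} else {0::real})"
  have "compactin (product_topology (\<lambda>i. euclidean) UNIV) ?B"
    by (subst compactin_PiE) auto
  then have "compact ?B"
    by (simp add: euclidean_product_topology)
  moreover have "closed {x. inner_on n x x = 1}"
    by (intro closed_Collect_eq continuous_on_inner_on_self continuous_intros)
  ultimately have "compact (?B \<inter> {x. inner_on n x x = 1})"
    by (rule compact_Int_closed)
  also have "?B \<inter> {x. inner_on n x x = 1} = unit_sphere_on n"
    by (auto simp: unit_sphere_on_def PiE_def Pi_def)
  finally show ?thesis .
qed

lemma gram_form_attains_min_on_sphere:
  assumes "n > 0"
  obtains u where "inner_on n u u = 1" and "\<And>x. gram_form A n u * inner_on n x x \<le> gram_form A n x"
proof -
  have "(\<lambda>i. if i = 0 then 1 else 0) \<in> unit_sphere_on n"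
    using assms by (auto simp: unit_sphere_on_def inner_on_def if_distrib cong: if_cong)
  then obtain u where "u \<in> unit_sphere_on n"
    and u_min: "\<And>y. y \<in> unit_sphere_on n \<Longrightarrow> gram_form A n u \<le> gram_form A n y"
    using continuous_attains_inf[OF compact_unit_sphere_on _ continuous_on_gram_form] by blast
  have "gram_form A n u * inner_on n x x \<le> gram_form A n x" for x
  proof (cases "inner_on n x x = 0")
    case True
    then show ?thesis using gram_form_nonneg[of A n x] by simp
  next
    case False
    then have x_pos: "inner_on n x x > 0" using inner_on_self_nonneg[of n x] by simp
    define c where "c = 1 / sqrt (inner_on n x x)"
    define y where "y = (\<lambda>i. if i < n then c * x i else 0)"
    have c2: "c\<^sup>2 * inner_on n x x = 1"
      using x_pos by (simp add: c_def power_divide)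
    have y_c: "\<And>i. i < n \<Longrightarrow> y i = c * x i" by (simp add: y_def)
    have y_norm: "inner_on n y y = 1"
      using inner_on_cong[OF y_c y_c] inner_on_scale c2 by simp
    have "\<bar>y i\<bar> \<le> 1" if "i < n" for i
    proof -
      have "(y i)\<^sup>2 \<le> inner_on n y y"
        unfolding inner_on_def power2_eq_square using that by (intro member_le_sum) auto
      then show ?thesis using y_norm abs_le_square_iff[of "y i" 1] by simp
    qed
    then have y: "y \<in> unit_sphere_on n"
      using y_norm by (auto simp: unit_sphere_on_def y_def abs_le_iff)
    have "mat_app A n y = mat_app A n (\<lambda>i. c * x i)"
      by (rule mat_app_cong) (simp add: y_def)
    then have "gram_form A n y = gram_form A n (\<lambda>i. c * x i)"
      by (simp add: gram_form_def)
    with u_min[OF y] have "gram_form A n u \<le> c\<^sup>2 * gram_form A n x"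
      by (simp add: gram_form_scale)
    then have "gram_form A n u * inner_on n x x \<le> gram_form A n x * (c\<^sup>2 * inner_on n x x)"
      using x_pos by (simp add: mult_right_mono mult_ac)
    then show ?thesis using c2 by simp
  qed
  moreover have "inner_on n u u = 1"
    using \<open>u \<in> unit_sphere_on n\<close> by (simp add: unit_sphere_on_def)
  ultimately show ?thesis using that by blast
qed

lemma linear_coeff_eq_0_if_nonneg:
  fixes a b :: real
  assumes "\<And>e. 0 \<le> a * e + b * e\<^sup>2"
  shows "a = 0"
proof (rule ccontr)
  assume "a \<noteq> 0"
  define d where "d = \<bar>b\<bar> + 1"
  have "d > 0" by (simp add: d_def)
  have "0 \<le> a * (- a / d) + b * (- a / d)\<^sup>2" by (rule assms)
  also have "\<dots> = a\<^sup>2 * (b - d) / d\<^sup>2"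
    using \<open>d > 0\<close> by (simp add: field_simps power2_eq_square)
  also have "\<dots> < 0"
    using \<open>a \<noteq> 0\<close> by (intro divide_neg_pos mult_pos_neg) (auto simp: d_def)
  finally show False by simp
qed

text \<open>First-order condition at a minimiser of the Rayleigh quotient: perturbing \<open>u\<close> to
  \<open>u + e y\<close> the linear term in \<open>e\<close> must vanish.\<close>

lemma gram_form_min_stationary:
  assumes u_norm: "inner_on n u u = 1"
    and u_min: "\<And>x. gram_form A n u * inner_on n x x \<le> gram_form A n x"
  shows "inner_on n (mat_app A n u) (mat_app A n y) = gram_form A n u * inner_on n u y"
proof -
  let ?l = "gram_form A n u"
  have "0 \<le> (2 * (inner_on n (mat_app A n u) (mat_app A n y) - ?l * inner_on n u y)) * e
      + (gram_form A n y - ?l * inner_on n y y) * e\<^sup>2" for e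
    using u_min[of "\<lambda>i. u i + e * y i"]
    by (simp add: gram_form_def mat_app_add_scale inner_on_self_add_scale u_norm algebra_simps)
  from linear_coeff_eq_0_if_nonneg[OF this] show ?thesis by simp
qed

lemma gram_form_min_eigenvector:
  assumes A: "A \<in> carrier_mat n n"
    and u_norm: "inner_on n u u = 1"
    and u_min: "\<And>x. gram_form A n u * inner_on n x x \<le> gram_form A n x"
  shows "eigenvector (transpose_mat A * A) (Matrix.vec n u) (gram_form A n u)"
proof -
  let ?l = "gram_form A n u"
  define w where "w = (\<lambda>j. mat_app (transpose_mat A) n (mat_app A n u) j - ?l * u j)"
  have "inner_on n w w = inner_on n (mat_app (transpose_mat A) n (mat_app A n u)) w - ?l * inner_on n u w"
    by (subst (1) w_def) (simp add: inner_on_def algebra_simps sum_subtractf sum_distrib_left)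
  also have "\<dots> = inner_on n (mat_app A n u) (mat_app A n w) - ?l * inner_on n u w"
    using inner_on_mat_app_transpose[OF A, of w "mat_app A n u"] by (simp add: inner_on_commute)
  finally have "inner_on n w w = 0"
    using gram_form_min_stationary[OF u_norm u_min] by simp
  then have w0: "\<And>j. j < n \<Longrightarrow> w j = 0"
    by (simp add: inner_on_self_eq_0_iff)
  have "Matrix.vec n u \<noteq> 0\<^sub>v n"
  proof
    assume "Matrix.vec n u = 0\<^sub>v n"
    then have "\<forall>i<n. u i = 0" by (metis index_vec index_zero_vec(1))
    then show False using u_norm by (simp add: inner_on_def)
  qed
  moreover have "transpose_mat A * A *\<^sub>v Matrix.vec n u = ?l \<cdot>\<^sub>v Matrix.vec n u"
  proof -
    have "transpose_mat A * A *\<^sub>v Matrix.vec n u = transpose_mat A *\<^sub>v (A *\<^sub>v Matrix.vec n u)"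
      using A by (intro assoc_mult_mat_vec) auto
    also have "\<dots> = Matrix.vec n (mat_app (transpose_mat A) n (mat_app A n u))"
      using A by (simp add: mult_mat_vec_eq_mat_app)
    also have "\<dots> = ?l \<cdot>\<^sub>v Matrix.vec n u"
      using w0 by (intro eq_vecI) (auto simp: w_def)
    finally show ?thesis .
  qed
  ultimately show ?thesis
    using A by (auto simp: eigenvector_def)
qed

lemma finite_gram_eigenvalues:
  assumes A: "A \<in> carrier_mat n n"
  shows "finite (gram_eigenvalues A)"
proof -
  have G: "transpose_mat A * A \<in> carrier_mat n n" using A by simp
  have "char_poly (transpose_mat A * A) \<noteq> 0"
    using degree_monic_char_poly[OF G] by (metis coeff_0 zero_neq_one)
  then have "finite {x. poly (char_poly (transpose_mat A * A)) x = 0}"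
    by (rule poly_roots_finite)
  then show ?thesis
    unfolding gram_eigenvalues_def eigenvalue_root_char_poly[OF G] .
qed

lemma smallest_sv_le_rayleigh:
  assumes A: "A \<in> carrier_mat n n" and x: "inner_on n x x > 0"
  shows "smallest_sv A \<le> sqrt (gram_form A n x / inner_on n x x)"
proof -
  have n: "n > 0" by (rule ccontr) (use x in \<open>simp add: inner_on_def\<close>)
  obtain u where u_norm: "inner_on n u u = 1"
    and u_min: "\<And>x. gram_form A n u * inner_on n x x \<le> gram_form A n x"
    using gram_form_attains_min_on_sphere[OF n, of A] by blast
  have "gram_form A n u \<in> gram_eigenvalues A"
    using gram_form_min_eigenvector[OF A u_norm u_min]
    unfolding gram_eigenvalues_def eigenvalue_def by blast
  then have "Min (gram_eigenvalues A) \<le> gram_form A n u"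
    using finite_gram_eigenvalues[OF A] by simp
  also have "\<dots> \<le> gram_form A n x / inner_on n x x"
    using u_min[of x] x by (simp add: le_divide_eq)
  finally show ?thesis
    unfolding smallest_sv_def by simp
qed

lemma eigenvalue_mat_diag:
  fixes g :: "nat \<Rightarrow> 'a :: field"
  shows "eigenvalue (mat_diag n g) k \<longleftrightarrow> k \<in> g ` {..<n}"
proof -
  have ut: "upper_triangular (mat_diag n g)"
    by (auto simp: upper_triangular_def mat_diag_def)
  have "eigenvalue (mat_diag n g) k \<longleftrightarrow> poly (\<Prod>a\<leftarrow>diag_mat (mat_diag n g). [:- a, 1:]) k = 0"
    by (simp add: eigenvalue_root_char_poly[OF mat_diag_dim] char_poly_upper_triangular[OF mat_diag_dim ut])
  also have "\<dots> \<longleftrightarrow> k \<in> set (diag_mat (mat_diag n g))"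
    by (simp add: poly_prod_list_zero_iff)
  also have "set (diag_mat (mat_diag n g)) = g ` {..<n}"
    by (auto simp: diag_mat_def mat_diag_def)
  finally show ?thesis .
qed

lemma transpose_mat_diag [simp]: "transpose_mat (mat_diag n g) = mat_diag n g"
  by (auto simp: mat_diag_def)

lemma op_norm_mat_diag:
  assumes "n > 0"
  shows "op_norm (mat_diag n d) = Max ((\<lambda>i. \<bar>d i\<bar>) ` {..<n})"
proof -
  have "gram_eigenvalues (mat_diag n d) = (\<lambda>i. (d i)\<^sup>2) ` {..<n}"
    by (simp add: gram_eigenvalues_def eigenvalue_mat_diag power2_eq_square)
  then have "op_norm (mat_diag n d) = sqrt (Max ((\<lambda>i. (d i)\<^sup>2) ` {..<n}))"
    by (simp add: op_norm_def)
  also have "\<dots> = Max (sqrt ` (\<lambda>i. (d i)\<^sup>2) ` {..<n})"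
    using assms by (intro mono_Max_commute) (auto simp: mono_def)
  also have "sqrt ` (\<lambda>i. (d i)\<^sup>2) ` {..<n} = (\<lambda>i. \<bar>d i\<bar>) ` {..<n}"
    by (simp add: image_image)
  finally show ?thesis .
qed

lemma finite_sign_mats: "finite (sign_mats n)"
proof -
  let ?D = "{..<n} \<times> {..<n}"
  have "sign_mats n \<subseteq> (\<lambda>f. Matrix.mat n n f) ` (PiE ?D (\<lambda>_. {1, -1::real}))"
  proof
    fix N assume N: "N \<in> sign_mats n"
    let ?f = "restrict (\<lambda>ij. N $$ ij) ?D"
    have "N = Matrix.mat n n ?f"
      using N by (intro eq_matI) (auto simp: sign_mats_def)
    moreover have "?f \<in> PiE ?D (\<lambda>_. {1, -1})"
      using N by (auto simp: sign_mats_def)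
    ultimately show "N \<in> (\<lambda>f. Matrix.mat n n f) ` (PiE ?D (\<lambda>_. {1, -1}))"
      by (rule image_eqI)
  qed
  moreover have "finite (PiE ?D (\<lambda>_. {1, -1::real}))"
    by (rule finite_PiE) auto
  ultimately show ?thesis
    using finite_subset by blast
qed

lemma sign_mats_nonempty: "sign_mats n \<noteq> {}"
proof -
  have "Matrix.mat n n (\<lambda>_. 1) \<in> sign_mats n" by (auto simp: sign_mats_def)
  then show ?thesis by blast
qed

lemma sign_mats_entry_sq:
  assumes "N \<in> sign_mats n" "i < n" "j < n"
  shows "N $$ (i,j) * N $$ (i,j) = 1"
proof -
  have "N $$ (i,j) = 1 \<or> N $$ (i,j) = -1"
    using assms by (simp add: sign_mats_def)
  then show ?thesis by auto
qed

definition flip_entry :: "nat \<Rightarrow> nat \<Rightarrow> nat \<Rightarrow> real mat \<Rightarrow> real mat" where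
  "flip_entry n p q N = Matrix.mat n n (\<lambda>(i,j). if (i,j) = (p,q) then - N $$ (i,j) else N $$ (i,j))"

lemma flip_entry_index:
  "i < n \<Longrightarrow> j < n \<Longrightarrow>
    flip_entry n p q N $$ (i,j) = (if (i,j) = (p,q) then - N $$ (i,j) else N $$ (i,j))"
  by (simp add: flip_entry_def)

lemma flip_entry_in_sign_mats: "N \<in> sign_mats n \<Longrightarrow> flip_entry n p q N \<in> sign_mats n"
  unfolding sign_mats_def flip_entry_def by auto

lemma flip_entry_flip_entry: "N \<in> sign_mats n \<Longrightarrow> flip_entry n p q (flip_entry n p q N) = N"
  unfolding sign_mats_def flip_entry_def by (intro eq_matI) auto

text \<open>Flipping the sign of the entry \<open>(p,q)\<close> is an involution of \<open>sign_mats n\<close> that negates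
  the summand, so the sum vanishes.\<close>

lemma sum_sign_mats_entry_mult_invariant:
  assumes "p < n" "q < n"
    and g: "\<And>N. N \<in> sign_mats n \<Longrightarrow> g (flip_entry n p q N) = g N"
  shows "(\<Sum>N\<in>sign_mats n. N $$ (p,q) * g N) = 0"
proof -
  have "(\<Sum>N\<in>sign_mats n. N $$ (p,q) * g N) = (\<Sum>N\<in>sign_mats n. - (N $$ (p,q) * g N))"
    by (rule sum.reindex_bij_witness[of _ "flip_entry n p q" "flip_entry n p q"])
       (use assms flip_entry_flip_entry flip_entry_in_sign_mats in \<open>auto simp: flip_entry_index\<close>)
  then show ?thesis by (simp add: sum_negf)
qed

lemma card_sign_mats_entry_neg:
  assumes "p < n" "q < n"
  shows "2 * card {N\<in>sign_mats n. N $$ (p,q) = -1} = card (sign_mats n)"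
proof -
  let ?E = "{N\<in>sign_mats n. N $$ (p,q) = -1}" and ?F = "{N\<in>sign_mats n. N $$ (p,q) = 1}"
  have split: "?E \<union> ?F = sign_mats n" and disj: "?E \<inter> ?F = {}"
    using assms by (auto simp: sign_mats_def)
  have fin: "finite ?E" "finite ?F"
    using finite_sign_mats by auto
  have "0 = (\<Sum>N\<in>sign_mats n. N $$ (p,q))"
    using sum_sign_mats_entry_mult_invariant[OF assms, of "\<lambda>_. 1"] by simp
  also have "\<dots> = (\<Sum>N\<in>?E. N $$ (p,q)) + (\<Sum>N\<in>?F. N $$ (p,q))"
    by (simp only: sum.union_disjoint[OF fin disj, symmetric] split)
  also have "\<dots> = real (card ?F) - real (card ?E)"
    by simp
  finally have "card ?E = card ?F" by simp
  then show ?thesis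
    using card_Un_disjoint[OF fin disj] by (simp only: split mult_2)
qed

lemma card_gt_mult_le_sum:
  fixes f :: "'a \<Rightarrow> real"
  assumes "finite S" and "\<And>x. x \<in> S \<Longrightarrow> 0 \<le> f x"
  shows "real (card {x\<in>S. t < f x}) * t \<le> sum f S"
proof -
  have "real (card {x\<in>S. t < f x}) * t = (\<Sum>x\<in>{x\<in>S. t < f x}. t)"
    by simp
  also have "\<dots> \<le> (\<Sum>x\<in>{x\<in>S. t < f x}. f x)"
    by (intro sum_mono) auto
  also have "\<dots> \<le> sum f S"
    using assms by (intro sum_mono2) auto
  finally show ?thesis .
qed

definition walk_sum :: "nat \<Rightarrow> nat \<Rightarrow> real mat \<Rightarrow> real" where
  "walk_sum n a N = (\<Sum>j\<in>{1..<n}. N $$ (a,j) * N $$ (j,0))"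

definition walk_energy :: "nat \<Rightarrow> real mat \<Rightarrow> real" where
  "walk_energy n N = (\<Sum>a<n. (walk_sum n a N)\<^sup>2)"

lemma walk_energy_nonneg: "0 \<le> walk_energy n N"
  unfolding walk_energy_def by (auto intro: sum_nonneg)

lemma sum_sign_mats_walk_products:
  assumes a: "a < n" and j: "j \<in> {1..<n}" and k: "k \<in> {1..<n}"
  shows "(\<Sum>N\<in>sign_mats n. (N $$ (a,j) * N $$ (j,0)) * (N $$ (a,k) * N $$ (k,0)))
    = (if j = k then real (card (sign_mats n)) else 0)"
proof (cases "j = k")
  case True
  have "(N $$ (a,j) * N $$ (j,0)) * (N $$ (a,k) * N $$ (k,0)) = 1" if "N \<in> sign_mats n" for N
  proof -
    have "(N $$ (a,j) * N $$ (j,0)) * (N $$ (a,k) * N $$ (k,0))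
        = (N $$ (a,j) * N $$ (a,j)) * (N $$ (j,0) * N $$ (j,0))"
      using True by (simp add: mult_ac)
    also have "\<dots> = 1"
      using sign_mats_entry_sq[OF that a] sign_mats_entry_sq[OF that, of j 0] j by simp
    finally show ?thesis .
  qed
  then show ?thesis using True by simp
next
  case False
  \<comment> \<open>the entry \<open>(a,j)\<close> occurs only once, as \<open>j \<noteq> k\<close> and \<open>j \<noteq> 0\<close>\<close>
  have "(\<Sum>N\<in>sign_mats n. N $$ (a,j) * (N $$ (j,0) * N $$ (a,k) * N $$ (k,0))) = 0"
    by (rule sum_sign_mats_entry_mult_invariant) (use a j k False in \<open>auto simp: flip_entry_index\<close>)
  then show ?thesis using False by (simp add: mult_ac)
qed

lemma sum_sign_mats_walk_sum_sq:
  assumes "a < n"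
  shows "(\<Sum>N\<in>sign_mats n. (walk_sum n a N)\<^sup>2) = real (n - 1) * real (card (sign_mats n))"
proof -
  let ?S = "sign_mats n" and ?J = "{1..<n}"
  have "(\<Sum>N\<in>?S. (walk_sum n a N)\<^sup>2)
      = (\<Sum>N\<in>?S. \<Sum>j\<in>?J. \<Sum>k\<in>?J. (N $$ (a,j) * N $$ (j,0)) * (N $$ (a,k) * N $$ (k,0)))"
    unfolding walk_sum_def power2_eq_square by (simp add: sum_product)
  also have "\<dots> = (\<Sum>j\<in>?J. \<Sum>k\<in>?J. \<Sum>N\<in>?S. (N $$ (a,j) * N $$ (j,0)) * (N $$ (a,k) * N $$ (k,0)))"
    by (subst sum.swap) (intro sum.cong refl sum.swap)
  also have "\<dots> = (\<Sum>j\<in>?J. \<Sum>k\<in>?J. if j = k then real (card ?S) else 0)"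
    using assms by (intro sum.cong refl sum_sign_mats_walk_products)
  also have "\<dots> = real (n - 1) * real (card ?S)"
    by simp
  finally show ?thesis .
qed

lemma sum_sign_mats_walk_energy:
  "(\<Sum>N\<in>sign_mats n. walk_energy n N) = real n * real (n - 1) * real (card (sign_mats n))"
proof -
  have "(\<Sum>N\<in>sign_mats n. walk_energy n N) = (\<Sum>a<n. \<Sum>N\<in>sign_mats n. (walk_sum n a N)\<^sup>2)"
    unfolding walk_energy_def by (rule sum.swap)
  also have "\<dots> = (\<Sum>a<n. real (n - 1) * real (card (sign_mats n)))"
    by (intro sum.cong refl sum_sign_mats_walk_sum_sq) auto
  finally show ?thesis
    by (simp only: sum_constant card_lessThan mult.assoc)
qed

lemma card_walk_energy_large:
  "8 * real (card {N\<in>sign_mats n. 8 * (real n)\<^sup>2 < walk_energy n N}) \<le> real (card (sign_mats n))"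
proof (cases "n = 0")
  case False
  have "real (card {N\<in>sign_mats n. 8 * (real n)\<^sup>2 < walk_energy n N}) * (8 * (real n)\<^sup>2)
      \<le> (\<Sum>N\<in>sign_mats n. walk_energy n N)"
    by (rule card_gt_mult_le_sum[OF finite_sign_mats walk_energy_nonneg])
  also have "\<dots> = real n * real (n - 1) * real (card (sign_mats n))"
    by (rule sum_sign_mats_walk_energy)
  also have "\<dots> \<le> (real n)\<^sup>2 * real (card (sign_mats n))"
    by (intro mult_right_mono) (auto simp: power2_eq_square intro!: mult_left_mono)
  finally show ?thesis
    using False by (simp add: mult_ac)
qed (simp add: walk_energy_def walk_sum_def)

lemma mat_app_add:
  assumes "A \<in> carrier_mat n n" "B \<in> carrier_mat n n" "i < n"
  shows "mat_app (A + B) n x i = mat_app A n x i + mat_app B n x i"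
  using assms by (simp add: mat_app_def algebra_simps sum.distrib)

lemma mat_app_mat_diag:
  assumes "i < n"
  shows "mat_app (mat_diag n d) n x i = d i * x i"
proof -
  have "mat_app (mat_diag n d) n x i = (\<Sum>j<n. if i = j then d j * x j else 0)"
    unfolding mat_app_def mat_diag_def using assms by (intro sum.cong) auto
  then show ?thesis using assms by simp
qed

definition corner_diag :: "nat \<Rightarrow> real \<Rightarrow> real mat" where
  "corner_diag n L = mat_diag n (\<lambda>i. if i = 0 then 1 else L)"

lemma op_norm_corner_diag:
  assumes "n \<ge> 2" "L \<ge> 1"
  shows "op_norm (corner_diag n L) = L"
proof -
  let ?d = "\<lambda>i::nat. \<bar>if i = 0 then 1 else L\<bar>"
  have "?d ` {..<n} \<subseteq> {1, L}"
    using assms by auto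
  moreover have "?d 0 \<in> ?d ` {..<n}"
    by (rule rev_image_eqI[where x = 0]) (use assms in auto)
  moreover have "?d 1 \<in> ?d ` {..<n}"
    by (rule rev_image_eqI[where x = 1]) (use assms in auto)
  ultimately have "?d ` {..<n} = {1, L}"
    using assms by auto
  with assms show ?thesis
    by (simp add: corner_diag_def op_norm_mat_diag)
qed

definition test_vector :: "real \<Rightarrow> real mat \<Rightarrow> nat \<Rightarrow> real" where
  "test_vector L N j = (if j = 0 then 1 else - N $$ (j,0) / L)"

text \<open>The diagonal part sends \<open>test_vector L N\<close> to minus the first column of \<open>N\<close> (at the
  corner via \<open>N $$ (0,0) = -1\<close>), cancelling \<open>N\<close> times the first coordinate.\<close>

lemma mat_app_corner_diag_test_vector:
  assumes N: "N \<in> sign_mats n" and corner: "N $$ (0,0) = -1" and a: "a < n" and L: "L \<noteq> 0"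
  shows "mat_app (corner_diag n L + N) n (test_vector L N) a = - walk_sum n a N / L"
proof -
  have N_carrier: "N \<in> carrier_mat n n"
    using N by (simp add: sign_mats_def)
  have "mat_app N n (test_vector L N) a
      = N $$ (a,0) + (\<Sum>j\<in>{1..<n}. N $$ (a,j) * test_vector L N j)"
    using a by (simp add: mat_app_def lessThan_atLeast0 sum.atLeast_Suc_lessThan test_vector_def)
  also have "\<dots> = N $$ (a,0) - walk_sum n a N / L"
    by (simp add: walk_sum_def test_vector_def sum_divide_distrib sum_negf)
  finally have "mat_app N n (test_vector L N) a = N $$ (a,0) - walk_sum n a N / L" .
  moreover have "(if a = 0 then 1 else L) * test_vector L N a = - N $$ (a,0)"
    using corner L by (simp add: test_vector_def)
  ultimately show ?thesis
    using a N_carrier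
    by (simp add: corner_diag_def mat_app_add mat_app_mat_diag)
qed

lemma smallest_sv_corner_diag_le:
  assumes N: "N \<in> sign_mats n" and corner: "N $$ (0,0) = -1" and "n > 0" and L: "L > 0"
  shows "smallest_sv (corner_diag n L + N) \<le> sqrt (walk_energy n N) / L"
proof -
  let ?x = "test_vector L N"
  have A: "corner_diag n L + N \<in> carrier_mat n n"
    using N by (simp add: corner_diag_def sign_mats_def)
  have "1 \<le> inner_on n ?x ?x"
  proof -
    have "?x 0 * ?x 0 \<le> inner_on n ?x ?x"
      unfolding inner_on_def using \<open>n > 0\<close> by (intro member_le_sum) auto
    then show ?thesis by (simp add: test_vector_def)
  qed
  moreover have "gram_form (corner_diag n L + N) n ?x = walk_energy n N / L\<^sup>2"
    using mat_app_corner_diag_test_vector[OF N corner _ L[THEN less_imp_neq, symmetric]]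
    by (simp add: gram_form_def inner_on_def walk_energy_def power2_eq_square sum_divide_distrib)
  ultimately have "smallest_sv (corner_diag n L + N) \<le> sqrt (walk_energy n N / L\<^sup>2 / inner_on n ?x ?x)"
    using smallest_sv_le_rayleigh[OF A, of ?x] by simp
  also have "\<dots> \<le> sqrt (walk_energy n N / L\<^sup>2 / 1)"
    using \<open>1 \<le> inner_on n ?x ?x\<close> walk_energy_nonneg[of n N]
    by (intro real_sqrt_le_mono divide_left_mono) auto
  also have "\<dots> = sqrt (walk_energy n N) / L"
    using L by (simp add: real_sqrt_divide)
  finally show ?thesis .
qed

lemma prob_smallest_sv_corner_diag:
  assumes "n > 0" and "L > 0"
  shows "3/8 \<le> measure_pmf.prob (bernoulli_matrix n)
    {N. smallest_sv (corner_diag n L + N) \<le> 3 * real n / L}"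
proof -
  let ?S = "sign_mats n" and ?X = "{N. smallest_sv (corner_diag n L + N) \<le> 3 * real n / L}"
  let ?E = "{N\<in>?S. N $$ (0,0) = -1}" and ?B = "{N\<in>?S. 8 * (real n)\<^sup>2 < walk_energy n N}"
  have "?E - ?B \<subseteq> ?S \<inter> ?X"
  proof
    fix N assume N: "N \<in> ?E - ?B"
    then have "walk_energy n N \<le> 8 * (real n)\<^sup>2"
      by auto
    also have "\<dots> \<le> (3 * real n)\<^sup>2"
      by (simp add: power_mult_distrib)
    finally have "walk_energy n N \<le> (3 * real n)\<^sup>2" .
    then have "sqrt (walk_energy n N) \<le> 3 * real n"
      by (simp add: real_le_lsqrt)
    then have "sqrt (walk_energy n N) / L \<le> 3 * real n / L"
      using \<open>L > 0\<close> by (simp add: divide_right_mono)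
    moreover have "smallest_sv (corner_diag n L + N) \<le> sqrt (walk_energy n N) / L"
      using N assms by (intro smallest_sv_corner_diag_le) auto
    ultimately show "N \<in> ?S \<inter> ?X"
      using N by simp
  qed
  then have "card (?E - ?B) \<le> card (?S \<inter> ?X)"
    using finite_sign_mats by (intro card_mono) auto
  moreover have "card ?E \<le> card ((?E - ?B) \<union> ?B)"
    using finite_sign_mats by (intro card_mono) auto
  moreover have "card ((?E - ?B) \<union> ?B) \<le> card (?E - ?B) + card ?B"
    by (rule card_Un_le)
  ultimately have "card ?E \<le> card (?S \<inter> ?X) + card ?B"
    by linarith
  then have "real (card ?E) \<le> real (card (?S \<inter> ?X)) + real (card ?B)"
    by (simp only: of_nat_add[symmetric] of_nat_le_iff)
  moreover have "2 * real (card ?E) = real (card ?S)"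
    using card_sign_mats_entry_neg[of 0 n 0] assms by simp
  moreover have "8 * real (card ?B) \<le> real (card ?S)"
    by (rule card_walk_energy_large)
  ultimately have "3/8 * real (card ?S) \<le> real (card (?S \<inter> ?X))"
    by linarith
  moreover have "card ?S > 0"
    using finite_sign_mats sign_mats_nonempty by (simp add: card_gt_0_iff)
  ultimately show ?thesis
    unfolding bernoulli_matrix_def measure_pmf_of_set[OF sign_mats_nonempty finite_sign_mats]
    by (simp add: le_divide_eq)
qed

lemma corner_diag_witness:
  assumes "n \<ge> 2" and "L \<ge> 1"
  shows "corner_diag n L \<in> carrier_mat n n \<and> op_norm (corner_diag n L) = L \<and>
    3/8 * real n powr (-1/2) \<le> measure_pmf.prob (bernoulli_matrix n)
      {N. smallest_sv (corner_diag n L + N) \<le> 3 * real n / L}"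
proof (intro conjI)
  show "corner_diag n L \<in> carrier_mat n n"
    by (simp add: corner_diag_def)
  show "op_norm (corner_diag n L) = L"
    using assms by (rule op_norm_corner_diag)
  have "real n powr (-1/2) \<le> 1"
    using powr_mono[of "-1/2" 0 "real n"] assms by simp
  then show "3/8 * real n powr (-1/2) \<le> measure_pmf.prob (bernoulli_matrix n)
      {N. smallest_sv (corner_diag n L + N) \<le> 3 * real n / L}"
    using prob_smallest_sv_corner_diag[of n L] assms by simp
qed

theorem theorem3p1:
  shows "\<exists>c1 c2 :: real. c1 > 0 \<and> c2 > 0 \<and>
    (\<forall>n :: nat. even n \<and> n > 0 \<longrightarrow>
      (\<forall>L :: real. L \<ge> real n \<longrightarrow>
        (\<exists>M \<in> carrier_mat n n. op_norm M = L \<and>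
           measure_pmf.prob (bernoulli_matrix n)
             {N. smallest_sv (M + N) \<le> c1 * real n / L} \<ge> c2 * real n powr (-1/2))))"
proof (rule exI[of _ 3], rule exI[of _ "3/8"], intro conjI allI impI)
  fix n :: nat and L :: real
  assume n: "even n \<and> n > 0" and L: "L \<ge> real n"
  then have "n \<ge> 2"
    by (auto elim: evenE)
  with L have "L \<ge> 1"
    by linarith
  with \<open>n \<ge> 2\<close> show "\<exists>M \<in> carrier_mat n n. op_norm M = L \<and>
      measure_pmf.prob (bernoulli_matrix n) {N. smallest_sv (M + N) \<le> 3 * real n / L}
        \<ge> 3/8 * real n powr (-1/2)"
    using corner_diag_witness by blast
qed simp_all

end
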